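(* Consider the explicit scheme on a uniform one-dimensional grid of spacing $h$, \[ \Phi^{1D,e}_{t+dt}(u):=u(\cdot,t)+dt\,F^{1D,e}[u(\cdot,t)], \] i.e. the forward Euler discretization of $u_t=F^{1D}[u]-f$ with $f=0$. If $dt\le(h^4/2)^{1/3}$, then the solution map satisfies the maximum principle \[ \min\Phi^{1D,e}_t(u)\le\Phi^{1D,e}_{t+dt}(u)\le\max\Phi^{1D,e}_t(u). \]
   Context: $F^{1D}[u]=(u_x^2u_{xx})^{1/3}$. With $A(p,q)=(p^2q)^{1/3}$ (real cube root), $A^+(p,q)=A(p^+,q^+)$, $A^-(p,q)=A(p^-,q^-)$, $x^+=\max(x,0)$, $x^-=\min(x,0)$, the (unregularized) scheme is $-F^{1D,e}[u]=A^+(\lvert u_x^h\rvert^+,-u_{xx}^h)+A^-(-\lvert u_x^h\rvert^-,-u_{xx}^h)$, with $\lvert u_x^h\rvert^+=\max\{\frac{u(x)-u(x+h)}h,\frac{u(x)-u(x-h)}h,0\}$, $-\lvert u_x^h\rvert^-=\min\{\frac{u(x)-u(x+h)}h,\frac{u(x)-u(x-h)}h,0\}$, $u_{xx}^h=\frac{u(x+h)-2u(x)+u(x-h)}{h^2}$. $\Phi^{1D,e}_t(u)$ denotes the grid function at time $t$; min and max are over grid points. *)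

theory Defs
  imports Complex_Main
begin

text \<open>Grid functions on the uniform 1D grid x_i = i*h, i in Z, are modelled as int => real.\<close>

definition posp :: "real \<Rightarrow> real" where "posp x = max x 0"
definition negp :: "real \<Rightarrow> real" where "negp x = min x 0"

text \<open>A(p,q) = (p^2 q)^(1/3), real cube root (root 3 is the odd real root).\<close>
definition A :: "real \<Rightarrow> real \<Rightarrow> real" where "A p q = root 3 (p^2 * q)"
definition Aplus :: "real \<Rightarrow> real \<Rightarrow> real" where "Aplus p q = A (posp p) (posp q)"
definition Aminus :: "real \<Rightarrow> real \<Rightarrow> real" where "Aminus p q = A (negp p) (negp q)"

definition abs_ux_plus :: "real \<Rightarrow> (int \<Rightarrow> real) \<Rightarrow> int \<Rightarrow> real" where
  "abs_ux_plus h u i = max (max ((u i - u (i+1)) / h) ((u i - u (i-1)) / h)) 0"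

definition neg_abs_ux_minus :: "real \<Rightarrow> (int \<Rightarrow> real) \<Rightarrow> int \<Rightarrow> real" where
  "neg_abs_ux_minus h u i = min (min ((u i - u (i+1)) / h) ((u i - u (i-1)) / h)) 0"

definition uxx :: "real \<Rightarrow> (int \<Rightarrow> real) \<Rightarrow> int \<Rightarrow> real" where
  "uxx h u i = (u (i+1) - 2 * u i + u (i-1)) / h^2"

definition F1De :: "real \<Rightarrow> (int \<Rightarrow> real) \<Rightarrow> int \<Rightarrow> real" where
  "F1De h u i = - (Aplus (abs_ux_plus h u i) (- uxx h u i) + Aminus (neg_abs_ux_minus h u i) (- uxx h u i))"

definition Phi_step :: "real \<Rightarrow> real \<Rightarrow> (int \<Rightarrow> real) \<Rightarrow> int \<Rightarrow> real" where
  "Phi_step h dt u i = u i + dt * F1De h u i"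

end

theory Submission
  imports Defs
begin

text \<open>Where \<open>u\<^sub>x\<^sub>x > 0\<close> only the \<open>A\<^sup>-\<close> term is active and the step raises \<open>u(x)\<close> by
  \<open>dt (n\<^sup>2 u\<^sub>x\<^sub>x)\<^sup>1\<^sup>/\<^sup>3\<close>, where \<open>h n\<close> is the rise to the higher neighbour. Since
  \<open>h u\<^sub>x\<^sub>x \<le> 2 n\<close>, the CFL condition \<open>dt\<^sup>3 \<le> h\<^sup>4/2\<close> makes this increment at most \<open>h n\<close>, so the
  new value does not exceed the higher neighbour; where \<open>u\<^sub>x\<^sub>x \<le> 0\<close> the step does not raise \<open>u(x)\<close>
  at all. The scheme is odd under \<open>u \<mapsto> -u\<close>, which turns this upper bound into the lower one.\<close>

lemma cube_le_of_le_powr_third: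
  fixes x c :: real
  assumes "0 \<le> x" "0 < c" "x \<le> c powr (1/3)"
  shows "x ^ 3 \<le> c"
proof -
  have "x ^ 3 \<le> (c powr (1/3)) ^ 3" using assms by (intro power_mono) auto
  also have "\<dots> = c" using assms(2) by (simp add: powr_realpow [symmetric] powr_powr)
  finally show ?thesis .
qed

lemma mult_root3_le:
  fixes dt h n q :: real
  assumes "0 < dt" "0 < h" "dt ^ 3 \<le> h ^ 4 / 2" "0 \<le> n" "0 \<le> q" "q * h \<le> 2 * n"
  shows "dt * root 3 (n\<^sup>2 * q) \<le> h * n"
proof -
  have "dt * root 3 (n\<^sup>2 * q) = root 3 (dt ^ 3 * (n\<^sup>2 * q))"
    using assms(1) by (simp add: real_root_mult real_root_power_cancel)
  also have "\<dots> \<le> root 3 ((h * n) ^ 3)"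
  proof (subst real_root_le_iff)
    have "dt ^ 3 * (n\<^sup>2 * q) \<le> h ^ 4 / 2 * (n\<^sup>2 * q)"
      using assms by (intro mult_right_mono) auto
    also have "\<dots> = h ^ 3 / 2 * n\<^sup>2 * (q * h)" by (simp add: power_def algebra_simps)
    also have "\<dots> \<le> h ^ 3 / 2 * n\<^sup>2 * (2 * n)" using assms by (intro mult_left_mono) auto
    also have "\<dots> = (h * n) ^ 3" by (simp add: power_def algebra_simps)
    finally show "dt ^ 3 * (n\<^sup>2 * q) \<le> (h * n) ^ 3" .
  qed simp
  also have "\<dots> = h * n" using assms by (simp add: real_root_power_cancel)
  finally show ?thesis .
qed

lemma A_uminus_uminus: "A (- p) (- q) = - A p q"
  by (simp add: A_def real_root_minus)

lemma F1De_uminus: "F1De h (\<lambda>j. - u j) i = - F1De h u i"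
proof -
  have "abs_ux_plus h (\<lambda>j. - u j) i = - neg_abs_ux_minus h u i"
    and "neg_abs_ux_minus h (\<lambda>j. - u j) i = - abs_ux_plus h u i"
    and "uxx h (\<lambda>j. - u j) i = - uxx h u i"
    by (simp_all add: abs_ux_plus_def neg_abs_ux_minus_def uxx_def minus_max_eq_min
        minus_min_eq_max minus_divide_left algebra_simps)
  moreover have "posp (- x) = - negp x" "negp (- x) = - posp x" for x
    by (simp_all add: posp_def negp_def)
  ultimately show ?thesis
    by (simp add: F1De_def Aplus_def Aminus_def flip: A_uminus_uminus)
qed

lemma Phi_step_uminus: "Phi_step h dt (\<lambda>j. - u j) i = - Phi_step h dt u i"
  by (simp add: Phi_step_def F1De_uminus)

lemma F1De_nonpos_of_uxx_nonpos:
  assumes "uxx h u i \<le> 0"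
  shows "F1De h u i \<le> 0"
  using assms by (simp add: F1De_def Aplus_def Aminus_def A_def posp_def negp_def mult_nonneg_nonpos)

lemma F1De_of_uxx_pos:
  assumes "0 < uxx h u i"
  shows "F1De h u i = root 3 ((neg_abs_ux_minus h u i)\<^sup>2 * uxx h u i)"
proof -
  have "negp (neg_abs_ux_minus h u i) = neg_abs_ux_minus h u i"
    by (simp add: negp_def neg_abs_ux_minus_def)
  with assms show ?thesis
    by (simp add: F1De_def Aplus_def Aminus_def A_def posp_def negp_def real_root_minus)
qed

lemma Phi_step_le_upper_bound:
  assumes "0 < h" "0 < dt" "dt ^ 3 \<le> h ^ 4 / 2" "\<And>j. u j \<le> M"
  shows "Phi_step h dt u i \<le> M"
proof (cases "uxx h u i \<le> 0")
  case True
  have "dt * F1De h u i \<le> 0"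
    using F1De_nonpos_of_uxx_nonpos [OF True] assms(2) by (simp add: mult_nonneg_nonpos)
  then show ?thesis using assms(4) [of i] by (simp add: Phi_step_def)
next
  case False
  define n where "n = - neg_abs_ux_minus h u i"
  have n_eq: "n = max (max ((u (i+1) - u i) / h) ((u (i-1) - u i) / h)) 0"
    by (simp add: n_def neg_abs_ux_minus_def minus_min_eq_max) argo
  have "uxx h u i * h = (u (i+1) - u i) / h + (u (i-1) - u i) / h"
    using assms(1) by (simp add: uxx_def power2_eq_square field_simps)
  also have "\<dots> \<le> 2 * n" unfolding n_eq by linarith
  finally have "uxx h u i * h \<le> 2 * n" .
  then have "dt * root 3 (n\<^sup>2 * uxx h u i) \<le> h * n"
    using mult_root3_le assms(1-3) False by (simp add: n_eq)
  then have "dt * F1De h u i \<le> h * n"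
    using F1De_of_uxx_pos False by (simp add: n_def)
  moreover have "u i + h * n \<le> M"
    using assms(1) assms(4) [of i] assms(4) [of "i+1"] assms(4) [of "i-1"]
    by (simp add: n_eq max_mult_distrib_left)
  ultimately show ?thesis by (simp add: Phi_step_def)
qed

lemma Phi_step_ge_lower_bound:
  assumes "0 < h" "0 < dt" "dt ^ 3 \<le> h ^ 4 / 2" "\<And>j. m \<le> u j"
  shows "m \<le> Phi_step h dt u i"
  using Phi_step_le_upper_bound [of h dt "\<lambda>j. - u j" "- m" i] assms
  by (simp add: Phi_step_uminus)

theorem mainTheorem12:
  fixes h dt :: real and u :: "int \<Rightarrow> real"
  assumes "h > 0" and "dt > 0" and "dt \<le> (h^4 / 2) powr (1/3)"
    and "bdd_below (range u)" and "bdd_above (range u)"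
  shows "\<forall>i. Inf (range u) \<le> Phi_step h dt u i \<and> Phi_step h dt u i \<le> Sup (range u)"
proof
  fix i
  have cfl: "dt ^ 3 \<le> h ^ 4 / 2"
    using cube_le_of_le_powr_third [of dt "h ^ 4 / 2"] assms(1-3) by simp
  have "Inf (range u) \<le> u j" "u j \<le> Sup (range u)" for j
    using assms(4,5) by (simp_all add: cInf_lower cSup_upper)
  then show "Inf (range u) \<le> Phi_step h dt u i \<and> Phi_step h dt u i \<le> Sup (range u)"
    using Phi_step_ge_lower_bound Phi_step_le_upper_bound assms(1,2) cfl by blast
qed

end
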